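(* Let $P$ be a finite propositional normal logic program and let $\Delta_w$ be any function assigning to each pair $(F,Q)$, where $F\subseteq \mathit{At}(P)$ and $Q$ is a Horn program with $\mathit{At}(Q)\subseteq\overline{F}$, a set $\Delta_w(F,Q)$ such that (W1) $\Delta_w(F,Q)\subseteq \overline{F}\setminus LM(Q)$, and (W2) $\Delta_w(F,Q)=\emptyset$ if and only if $\overline{F}\setminus LM(Q)=\emptyset$. Define $B_w(F)=F\cup \Delta_w(F,P_{F,T}^h)$ where $T=GL(\overline{F})$. Then for every $F$, $F\subseteq B_w(F)\subseteq B(F)$; the sequence $B_w^i(\emptyset)$, $i=0,1,2,\dots$, is contained in $F_{wfs}$ and is nondecreasing, hence there is a first $i$ with $B_w^i(\emptyset)=B_w^{i+1}(\emptyset)$; and for this $i$, $B_w^i(\emptyset)=F_{wfs}$.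
   Context: $\mathit{At}(P)$ is the set of atoms occurring in $P$ (and $\mathit{At}(Q)$ those in $Q$); for $X\subseteq \mathit{At}(P)$, $\overline{X}=\mathit{At}(P)\setminus X$. $LM(Q)$ is the least model of a Horn program $Q$. For $M\subseteq\mathit{At}(P)$, $P_M$ is obtained from $P$ by removing all rules whose bodies contain $\mathbf{not}(a)$ with $a\in M$; $P^h$ is obtained by deleting all negative literals from rule bodies; $GL(M)=LM((P_M)^h)$. $T_{wfs}=\mathrm{lfp}(GL\circ GL)$, $F_{wfs}=\overline{GL(T_{wfs})}$. For $F,T\subseteq\mathit{At}(P)$, $P_{F,T}$ is obtained from $P$ by removing all rules with head in $F$, all rules whose body contains a positive occurrence of an atom of $F$, and all rules whose body contains $\mathbf{not}(a)$ with $a\in T$; $P_{F,T}^h=(P_{F,T})^h$ (note $\mathit{At}(P_{F,T}^h)\subseteq\overline F$). $B(F)=\overline{LM(P_{F,T}^h)}$ with $T=GL(\overline F)$. $B_w^i$ denotes the $i$-fold iterate of $B_w$. *)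

theory Defs
  imports Main
begin

datatype 'a rule = Rule (head: 'a) (pos: "'a set") (neg: "'a set")

type_synonym 'a program = "'a rule set"

definition finite_program :: "'a program \<Rightarrow> bool" where
  "finite_program P \<longleftrightarrow> finite P \<and> (\<forall>r\<in>P. finite (pos r) \<and> finite (neg r))"

definition horn :: "'a program \<Rightarrow> bool" where
  "horn Q \<longleftrightarrow> (\<forall>r\<in>Q. neg r = {})"

definition At :: "'a program \<Rightarrow> 'a set" where
  "At P = (\<Union>r\<in>P. insert (head r) (pos r \<union> neg r))"

definition cmpl :: "'a program \<Rightarrow> 'a set \<Rightarrow> 'a set" where
  "cmpl P X = At P - X"

definition LM :: "'a program \<Rightarrow> 'a set" where
  "LM Q = lfp (\<lambda>X. {head r | r. r \<in> Q \<and> pos r \<subseteq> X})"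

definition reduct :: "'a program \<Rightarrow> 'a set \<Rightarrow> 'a program" where
  "reduct P M = {r \<in> P. neg r \<inter> M = {}}"

definition hornpart :: "'a program \<Rightarrow> 'a program" where
  "hornpart P = (\<lambda>r. Rule (head r) (pos r) {}) ` P"

definition GL :: "'a program \<Rightarrow> 'a set \<Rightarrow> 'a set" where
  "GL P M = LM (hornpart (reduct P M))"

definition T_wfs :: "'a program \<Rightarrow> 'a set" where
  "T_wfs P = lfp (GL P \<circ> GL P)"

definition F_wfs :: "'a program \<Rightarrow> 'a set" where
  "F_wfs P = cmpl P (GL P (T_wfs P))"

definition PFT :: "'a program \<Rightarrow> 'a set \<Rightarrow> 'a set \<Rightarrow> 'a program" where
  "PFT P F T = {r \<in> P. head r \<notin> F \<and> pos r \<inter> F = {} \<and> neg r \<inter> T = {}}"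

definition PFTh :: "'a program \<Rightarrow> 'a set \<Rightarrow> 'a set \<Rightarrow> 'a program" where
  "PFTh P F T = hornpart (PFT P F T)"

definition Bop :: "'a program \<Rightarrow> 'a set \<Rightarrow> 'a set" where
  "Bop P F = cmpl P (LM (PFTh P F (GL P (cmpl P F))))"

definition Bw :: "'a program \<Rightarrow> ('a set \<Rightarrow> 'a program \<Rightarrow> 'a set) \<Rightarrow> 'a set \<Rightarrow> 'a set" where
  "Bw P \<Delta> F = F \<union> \<Delta> F (PFTh P F (GL P (cmpl P F)))"

end

theory Submission
  imports Defs
begin

text \<open>Write \<open>U = GL(T_wfs)\<close>, so that \<open>F_wfs\<close> is the complement of \<open>U\<close>.
If \<open>F \<subseteq> F_wfs\<close>, then \<open>T = GL(\<bar>F) \<subseteq> GL(U) = T_wfs\<close>, so every rule of \<open>P_{T_wfs}\<close>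
deriving an atom of \<open>U\<close> survives in \<open>P_{F,T}\<close>; hence \<open>U \<subseteq> LM(P_{F,T}^h)\<close>, i.e.
\<open>B(F) \<subseteq> F_wfs\<close>. By (W1) also \<open>B_w(F) \<subseteq> B(F) \<subseteq> F_wfs\<close>, and the iterates, which increase
inside the finite set \<open>At(P)\<close>, eventually stop. At a stopping point \<open>F\<close> we have
\<open>\<Delta>_w = \<emptyset>\<close>, so (W2) gives \<open>\<bar>F \<subseteq> LM(P_{F,T}^h) \<subseteq> GL(GL(\<bar>F))\<close>. Being a post-fixpoint of \<open>GL \<circ> GL\<close>,
\<open>\<bar>F\<close> lies below the greatest one, which is \<open>U\<close>; hence \<open>F_wfs \<subseteq> F\<close>.\<close>

lemma LM_unfold: "LM Q = {head r | r. r \<in> Q \<and> pos r \<subseteq> LM Q}"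
  unfolding LM_def by (rule lfp_unfold) (auto simp: mono_def)

lemma LM_closed: "r \<in> Q \<Longrightarrow> pos r \<subseteq> LM Q \<Longrightarrow> head r \<in> LM Q"
  by (subst LM_unfold) blast

lemma LM_subset_heads: "LM Q \<subseteq> head ` Q"
  by (subst LM_unfold) blast

lemma LM_induct: "(\<And>r. r \<in> Q \<Longrightarrow> pos r \<subseteq> X \<Longrightarrow> head r \<in> X) \<Longrightarrow> LM Q \<subseteq> X"
  unfolding LM_def by (rule lfp_lowerbound) blast

lemma LM_mono: "Q \<subseteq> Q' \<Longrightarrow> LM Q \<subseteq> LM Q'"
  by (rule LM_induct) (auto intro: LM_closed)

lemma LM_hornpart [simp]: "LM (hornpart Q) = LM Q"
proof -
  have "{head r | r. r \<in> hornpart Q \<and> pos r \<subseteq> X} = {head r | r. r \<in> Q \<and> pos r \<subseteq> X}" for X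
  proof (intro equalityI subsetI)
    fix x
    assume "x \<in> {head r | r. r \<in> Q \<and> pos r \<subseteq> X}"
    then obtain r where "r \<in> Q" "pos r \<subseteq> X" "x = head r"
      by blast
    then show "x \<in> {head r | r. r \<in> hornpart Q \<and> pos r \<subseteq> X}"
      unfolding hornpart_def by (auto intro!: exI[of _ "Rule (head r) (pos r) {}"])
  qed (auto simp: hornpart_def)
  then show ?thesis
    unfolding LM_def by simp
qed

lemma GL_eq_LM_reduct: "GL P M = LM (reduct P M)"
  by (simp add: GL_def)

lemma GL_antimono: "M \<subseteq> M' \<Longrightarrow> GL P M' \<subseteq> GL P M"
  unfolding GL_eq_LM_reduct by (rule LM_mono) (auto simp: reduct_def)

lemma GL_subset_At: "GL P M \<subseteq> At P"
  using LM_subset_heads[of "reduct P M"] by (auto simp: GL_eq_LM_reduct reduct_def At_def)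

lemma T_wfs_fixpoint: "GL P (GL P (T_wfs P)) = T_wfs P"
proof -
  have "mono (GL P \<circ> GL P)"
    by (auto simp: mono_def intro!: GL_antimono)
  then show ?thesis
    unfolding T_wfs_def by (subst (2) lfp_unfold) auto
qed

lemma T_wfs_least: "GL P (GL P X) \<subseteq> X \<Longrightarrow> T_wfs P \<subseteq> X"
  unfolding T_wfs_def by (rule lfp_lowerbound) simp

lemma post_fixpoint_subset_GL_T_wfs:
  assumes "V \<subseteq> GL P (GL P V)"
  shows "V \<subseteq> GL P (T_wfs P)"
proof -
  have "GL P (GL P (GL P V)) \<subseteq> GL P V"
    using GL_antimono[OF assms] .
  then have "T_wfs P \<subseteq> GL P V"
    by (rule T_wfs_least)
  then show ?thesis
    using assms GL_antimono by blast
qed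

lemma F_wfs_eq: "F_wfs P = At P - GL P (T_wfs P)"
  by (simp add: F_wfs_def cmpl_def)

lemma F_wfs_subset_At: "F_wfs P \<subseteq> At P"
  by (simp add: F_wfs_eq)

lemma finite_At: "finite_program P \<Longrightarrow> finite (At P)"
  unfolding finite_program_def At_def by auto

lemma admissible_PFTh:
  assumes "finite_program P"
  shows "finite_program (PFTh P F T)" and "horn (PFTh P F T)" and "At (PFTh P F T) \<subseteq> cmpl P F"
proof -
  show "finite_program (PFTh P F T)"
    using assms unfolding finite_program_def PFTh_def hornpart_def PFT_def by auto
  show "horn (PFTh P F T)"
    unfolding horn_def PFTh_def hornpart_def by auto
  show "At (PFTh P F T) \<subseteq> cmpl P F"
    unfolding At_def cmpl_def PFTh_def hornpart_def PFT_def by auto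
qed

lemma LM_PFTh [simp]: "LM (PFTh P F T) = LM (PFT P F T)"
  by (simp add: PFTh_def)

lemma PFT_subset_reduct: "PFT P F T \<subseteq> reduct P T"
  unfolding PFT_def reduct_def by blast

lemma LM_PFT_subset_cmpl: "LM (PFT P F T) \<subseteq> cmpl P F"
  using LM_subset_heads[of "PFT P F T"] by (auto simp: PFT_def cmpl_def At_def)

lemma GL_T_wfs_subset_LM_PFT:
  assumes F: "F \<subseteq> F_wfs P"
  shows "GL P (T_wfs P) \<subseteq> LM (PFT P F (GL P (cmpl P F)))"
proof -
  define U where "U = GL P (T_wfs P)"
  define T where "T = GL P (cmpl P F)"
  have "U \<subseteq> cmpl P F"
    using F GL_subset_At[of P "T_wfs P"] by (auto simp: U_def F_wfs_eq cmpl_def)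
  then have "T \<subseteq> GL P U"
    unfolding T_def by (rule GL_antimono)
  then have T_subset: "T \<subseteq> T_wfs P"
    by (simp add: U_def T_wfs_fixpoint)
  have "LM (reduct P (T_wfs P)) \<subseteq> LM (PFT P F T) \<inter> U"
  proof (rule LM_induct)
    fix r
    assume r: "r \<in> reduct P (T_wfs P)" "pos r \<subseteq> LM (PFT P F T) \<inter> U"
    then have "head r \<in> U"
      by (auto simp: U_def GL_eq_LM_reduct intro: LM_closed)
    with r F T_subset have "r \<in> PFT P F T"
      by (auto simp: PFT_def reduct_def F_wfs_eq U_def)
    with r \<open>head r \<in> U\<close> show "head r \<in> LM (PFT P F T) \<inter> U"
      by (auto intro: LM_closed)
  qed
  then show ?thesis
    by (auto simp: U_def T_def GL_eq_LM_reduct)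
qed

lemma Bop_subset_F_wfs: "F \<subseteq> F_wfs P \<Longrightarrow> Bop P F \<subseteq> F_wfs P"
  using GL_T_wfs_subset_LM_PFT by (fastforce simp: Bop_def F_wfs_eq cmpl_def)

lemma F_wfs_subset_of_Bop_subset:
  assumes "Bop P F \<subseteq> F"
  shows "F_wfs P \<subseteq> F"
proof -
  define V where "V = cmpl P F"
  have "V \<subseteq> LM (PFT P F (GL P V))"
    using assms by (auto simp: V_def Bop_def cmpl_def)
  also have "\<dots> \<subseteq> GL P (GL P V)"
    unfolding GL_eq_LM_reduct[of P "GL P V"] by (rule LM_mono[OF PFT_subset_reduct])
  finally have "V \<subseteq> GL P (T_wfs P)"
    by (rule post_fixpoint_subset_GL_T_wfs)
  then show ?thesis
    by (auto simp: V_def F_wfs_eq cmpl_def)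
qed

lemma increasing_chain_in_finite_set_stabilises:
  fixes S :: "nat \<Rightarrow> 'a set"
  assumes "finite A" and "\<And>i. S i \<subseteq> A" and "\<And>i. S i \<subseteq> S (Suc i)"
  shows "\<exists>i. S i = S (Suc i)"
proof (rule ccontr)
  assume "\<nexists>i. S i = S (Suc i)"
  with assms(3) have "S i \<subset> S (Suc i)" for i
    by blast
  then have card_less: "card (S i) < card (S (Suc i))" for i
    using psubset_card_mono[OF finite_subset[OF assms(2) assms(1)]] by blast
  have card_ge: "i \<le> card (S i)" for i
  proof (induction i)
    case (Suc i)
    with card_less[of i] show ?case
      by simp
  qed simp
  have "card (S i) \<le> card A" for i
    using assms(1,2) by (rule card_mono)
  with card_ge[of "Suc (card A)"] show False
    by (metis not_less_eq_eq)
qed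

lemma Bw_increasing: "F \<subseteq> Bw P \<Delta> F"
  by (simp add: Bw_def)

locale weak_selection =
  fixes P :: "'a program" and \<Delta> :: "'a set \<Rightarrow> 'a program \<Rightarrow> 'a set"
  assumes finite_P: "finite_program P"
    and W1: "\<And>F Q. F \<subseteq> At P \<Longrightarrow> finite_program Q \<Longrightarrow> horn Q \<Longrightarrow> At Q \<subseteq> cmpl P F \<Longrightarrow>
               \<Delta> F Q \<subseteq> cmpl P F - LM Q"
    and W2: "\<And>F Q. F \<subseteq> At P \<Longrightarrow> finite_program Q \<Longrightarrow> horn Q \<Longrightarrow> At Q \<subseteq> cmpl P F \<Longrightarrow>
               (\<Delta> F Q = {} \<longleftrightarrow> cmpl P F - LM Q = {})"
begin

abbreviation B_iter :: "nat \<Rightarrow> 'a set" where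
  "B_iter i \<equiv> (Bw P \<Delta> ^^ i) {}"

lemma Bw_subset_Bop:
  assumes F: "F \<subseteq> At P"
  shows "Bw P \<Delta> F \<subseteq> Bop P F"
proof -
  let ?Q = "PFTh P F (GL P (cmpl P F))"
  have "\<Delta> F ?Q \<subseteq> cmpl P F - LM ?Q"
    using W1[OF F admissible_PFTh[OF finite_P]] .
  moreover have "F \<inter> LM ?Q = {}"
    using LM_PFT_subset_cmpl by (fastforce simp: cmpl_def)
  ultimately show ?thesis
    using F by (auto simp: Bw_def Bop_def cmpl_def)
qed

lemma Bop_subset_of_Bw_fixpoint:
  assumes F: "F \<subseteq> At P" and fixpoint: "Bw P \<Delta> F = F"
  shows "Bop P F \<subseteq> F"
proof -
  let ?Q = "PFTh P F (GL P (cmpl P F))"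
  have "\<Delta> F ?Q \<subseteq> F"
    using fixpoint by (auto simp: Bw_def)
  with W1[OF F admissible_PFTh[OF finite_P]] have "\<Delta> F ?Q = {}"
    by (auto simp: cmpl_def)
  with W2[OF F admissible_PFTh[OF finite_P]] show ?thesis
    by (auto simp: Bop_def cmpl_def)
qed

lemma B_iter_Suc: "B_iter (Suc i) = Bw P \<Delta> (B_iter i)"
  by simp

lemma B_iter_subset_F_wfs: "B_iter i \<subseteq> F_wfs P"
proof (induction i)
  case 0
  show ?case
    unfolding funpow_0 by (rule empty_subsetI)
next
  case (Suc i)
  have "B_iter i \<subseteq> At P"
    using Suc.IH F_wfs_subset_At by (rule order_trans)
  then have "Bw P \<Delta> (B_iter i) \<subseteq> Bop P (B_iter i)"
    by (rule Bw_subset_Bop)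
  also have "\<dots> \<subseteq> F_wfs P"
    using Suc.IH by (rule Bop_subset_F_wfs)
  finally show ?case
    unfolding B_iter_Suc .
qed

lemma B_iter_mono: "B_iter i \<subseteq> B_iter (Suc i)"
  unfolding B_iter_Suc by (rule Bw_increasing)

lemma B_iter_stabilises: "\<exists>i. B_iter i = B_iter (Suc i)"
proof (rule increasing_chain_in_finite_set_stabilises[of "At P" "\<lambda>i. B_iter i"])
  show "finite (At P)"
    using finite_P by (rule finite_At)
  show "B_iter i \<subseteq> At P" for i
    using B_iter_subset_F_wfs F_wfs_subset_At by (rule order_trans)
  show "B_iter i \<subseteq> B_iter (Suc i)" for i
    by (rule B_iter_mono)
qed

lemma B_iter_fixpoint_eq_F_wfs:
  assumes "B_iter i = B_iter (Suc i)"
  shows "B_iter i = F_wfs P"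
proof -
  have "B_iter i \<subseteq> At P"
    using B_iter_subset_F_wfs F_wfs_subset_At by (rule order_trans)
  moreover have "Bw P \<Delta> (B_iter i) = B_iter i"
    using assms unfolding B_iter_Suc by (rule sym)
  ultimately have "Bop P (B_iter i) \<subseteq> B_iter i"
    by (rule Bop_subset_of_Bw_fixpoint)
  then show ?thesis
    using B_iter_subset_F_wfs F_wfs_subset_of_Bop_subset by blast
qed

end

theorem mainTheorem3:
  fixes P :: "'a program" and \<Delta> :: "'a set \<Rightarrow> 'a program \<Rightarrow> 'a set"
  assumes finP: "finite_program P"
    and W1: "\<And>F Q. F \<subseteq> At P \<Longrightarrow> finite_program Q \<Longrightarrow> horn Q \<Longrightarrow> At Q \<subseteq> cmpl P F \<Longrightarrow>
               \<Delta> F Q \<subseteq> cmpl P F - LM Q"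
    and W2: "\<And>F Q. F \<subseteq> At P \<Longrightarrow> finite_program Q \<Longrightarrow> horn Q \<Longrightarrow> At Q \<subseteq> cmpl P F \<Longrightarrow>
               (\<Delta> F Q = {} \<longleftrightarrow> cmpl P F - LM Q = {})"
  shows "(\<forall>F. F \<subseteq> At P \<longrightarrow> F \<subseteq> Bw P \<Delta> F \<and> Bw P \<Delta> F \<subseteq> Bop P F)
       \<and> (\<forall>i. (Bw P \<Delta> ^^ i) {} \<subseteq> F_wfs P)
       \<and> (\<forall>i. (Bw P \<Delta> ^^ i) {} \<subseteq> (Bw P \<Delta> ^^ Suc i) {})
       \<and> (\<exists>i. (Bw P \<Delta> ^^ i) {} = (Bw P \<Delta> ^^ Suc i) {})
       \<and> (\<forall>i. ((Bw P \<Delta> ^^ i) {} = (Bw P \<Delta> ^^ Suc i) {}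
               \<and> (\<forall>j<i. (Bw P \<Delta> ^^ j) {} \<noteq> (Bw P \<Delta> ^^ Suc j) {}))
             \<longrightarrow> (Bw P \<Delta> ^^ i) {} = F_wfs P)"
proof -
  interpret weak_selection P \<Delta>
    using assms by unfold_locales
  show ?thesis
  proof (intro conjI)
    show "\<forall>F. F \<subseteq> At P \<longrightarrow> F \<subseteq> Bw P \<Delta> F \<and> Bw P \<Delta> F \<subseteq> Bop P F"
      using Bw_subset_Bop by (simp add: Bw_increasing)
    show "\<forall>i. B_iter i = B_iter (Suc i) \<and> (\<forall>j<i. B_iter j \<noteq> B_iter (Suc j)) \<longrightarrow> B_iter i = F_wfs P"
      using B_iter_fixpoint_eq_F_wfs by blast
  qed (use B_iter_subset_F_wfs B_iter_mono B_iter_stabilises in blast)+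
qed

end
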